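(* For $p\ge 1$ let $\Delta_p\subset\mathbf R^2$ be the rectangle with vertices $(0,0),(p,0),(p,1),(0,1)$, let $U_p=\{(a,b,c): a\mu_1+b\mu_2+c>0 \text{ on }\Delta_p\}$, and let $$E_p(a,b,c)=8\pi^2\,\frac{\left(\int_{\partial\Delta_p}(a\mu_1+b\mu_2+c)^{-2}\,d\sigma\right)^2}{\int_{\Delta_p}(a\mu_1+b\mu_2+c)^{-4}\,d\mu},$$ viewed as a function on $U_p/\mathbf R_+$. If $1\le p\le 2$, then $E_p$ has the unique critical point $[(0,0,1)]$. If $p>2$, then $E_p$ has exactly three critical points: $$[(0,0,1)],\qquad \left[\left(\pm1,\,0,\,\tfrac12\left(\tfrac{p^{3/2}}{\sqrt{p-2}}\mp p\right)\right)\right].$$ *)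

theory Defs
  imports "HOL-Analysis.Analysis"
begin

definition Delta :: "real \<Rightarrow> (real \<times> real) set" where
  "Delta p = cbox (0, 0) (p, 1)"

definition aff :: "real \<times> real \<times> real \<Rightarrow> real \<times> real \<Rightarrow> real" where
  "aff v q = fst v * fst q + fst (snd v) * snd q + snd (snd v)"

definition U :: "real \<Rightarrow> (real \<times> real \<times> real) set" where
  "U p = {v. \<forall>q\<in>Delta p. aff v q > 0}"

text \<open>Integral over the boundary of Delta_p w.r.t. the boundary measure d sigma
  (arc length on each of the four edges; all edge normals are primitive lattice
  vectors, so the toric boundary measure coincides with arc length).\<close>
definition bdry_integral :: "real \<Rightarrow> (real \<times> real \<Rightarrow> real) \<Rightarrow> real" where
  "bdry_integral p f =
     integral {0..p} (\<lambda>x. f (x, 0)) + integral {0..p} (\<lambda>x. f (x, 1)) +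
     integral {0..1} (\<lambda>y. f (0, y)) + integral {0..1} (\<lambda>y. f (p, y))"

definition E :: "real \<Rightarrow> real \<times> real \<times> real \<Rightarrow> real" where
  "E p v = 8 * pi ^ 2 * (bdry_integral p (\<lambda>q. 1 / (aff v q) ^ 2)) ^ 2
            / integral (Delta p) (\<lambda>q. 1 / (aff v q) ^ 4)"

definition critical_point :: "('a::real_normed_vector \<Rightarrow> real) \<Rightarrow> 'a \<Rightarrow> bool" where
  "critical_point f x \<longleftrightarrow> (f has_derivative (\<lambda>_. 0)) (at x)"

end

theory Submission
  imports Defs
begin

text \<open>
  In the centred coordinates (\<alpha>, \<beta>, u) = (a p/2, b/2, value at the centre of Delta p) the corner
  values of the affine function are u \<plusminus> \<alpha> \<plusminus> \<beta>, so U p becomes the cone |\<alpha>| + |\<beta>| < u. Both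
  integrals are elementary: with P the product of the corner values, the boundary integral is
  2 L / P and the area integral p Q / (3 P^2), where L = (p + 1) u^2 + (p - 1) (\<beta>^2 - \<alpha>^2) and
  Q = 3 u^4 - 2 u^2 (\<alpha>^2 + \<beta>^2) - (\<alpha>^2 - \<beta>^2)^2; hence E p = 96 \<pi>^2 L^2 / (p Q).
  The gradient of L^2 / Q is proportional to 2 Q \<nabla>L - L \<nabla>Q. On the cone its \<beta>-component is
  \<beta> times a positive quantity, and on \<beta> = 0 the remaining components are multiples of
  \<alpha> ((2 - p) u^2 + p \<alpha>^2). The second factor vanishes inside the cone only for p > 2, on the two
  rays u = \<bar>\<alpha>\<bar> sqrt (p / (p - 2)).
\<close>

lemma integral_eq_antiderivative:
  fixes F f :: "real \<Rightarrow> real"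
  assumes "a \<le> b" "\<And>x. x \<in> {a..b} \<Longrightarrow> (F has_real_derivative f x) (at x)"
  shows "integral {a..b} f = F b - F a"
  using assms
  by (intro integral_unique fundamental_theorem_of_calculus)
     (auto simp: has_real_derivative_iff_has_vector_derivative[symmetric] intro: has_field_derivative_at_within)

lemma affine_pos_between:
  fixes s k L x :: real
  assumes "0 < k" "0 < s * L + k" "0 \<le> x" "x \<le> L"
  shows "0 < s * x + k"
proof (cases "s \<ge> 0")
  case True
  then show ?thesis using assms by (simp add: add_nonneg_pos)
next
  case False
  then have "s * L \<le> s * x" using assms by (simp add: mult_left_mono_neg)
  then show ?thesis using assms by linarith
qed

lemma integral_inverse_square_affine:
  fixes s k L :: real
  assumes "0 < k" "0 < s * L + k" "0 \<le> L"
  shows "integral {0..L} (\<lambda>x. 1 / (s * x + k)^2) = L / (k * (s * L + k))"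
proof -
  have "((\<lambda>x. x / (k * (s * x + k))) has_real_derivative 1 / (s * x + k)^2) (at x)"
    if "x \<in> {0..L}" for x
  proof -
    have "0 < s * x + k" using that affine_pos_between[OF assms(1,2)] by auto
    then show ?thesis using assms(1)
      by (auto intro!: derivative_eq_intros simp: divide_simps) algebra
  qed
  from integral_eq_antiderivative[OF assms(3) this] show ?thesis by simp
qed

lemma integral_inverse_cube_affine:
  fixes s k L :: real
  assumes "0 < k" "0 < s * L + k" "0 \<le> L"
  shows "integral {0..L} (\<lambda>x. 1 / (s * x + k)^3) = L * (2 * k + s * L) / (2 * k^2 * (s * L + k)^2)"
proof -
  have "((\<lambda>x. x * (2 * k + s * x) / (2 * k^2 * (s * x + k)^2)) has_real_derivative 1 / (s * x + k)^3) (at x)"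
    if "x \<in> {0..L}" for x
  proof -
    have "0 < s * x + k" using that affine_pos_between[OF assms(1,2)] by auto
    then show ?thesis using assms(1)
      by (auto intro!: derivative_eq_intros simp: divide_simps) algebra
  qed
  from integral_eq_antiderivative[OF assms(3) this] show ?thesis by simp
qed

lemma integral_inverse_fourth_affine:
  fixes s k L :: real
  assumes "0 < k" "0 < s * L + k" "0 \<le> L"
  shows "integral {0..L} (\<lambda>x. 1 / (s * x + k)^4)
    = L * (3 * k^2 + 3 * k * s * L + s^2 * L^2) / (3 * k^3 * (s * L + k)^3)"
proof -
  have "((\<lambda>x. x * (3 * k^2 + 3 * k * s * x + s^2 * x^2) / (3 * k^3 * (s * x + k)^3))
          has_real_derivative 1 / (s * x + k)^4) (at x)"
    if "x \<in> {0..L}" for x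
  proof -
    have "0 < s * x + k" using that affine_pos_between[OF assms(1,2)] by auto
    then show ?thesis using assms(1)
      by (auto intro!: derivative_eq_intros simp: divide_simps) algebra
  qed
  from integral_eq_antiderivative[OF assms(3) this] show ?thesis by simp
qed

lemma critical_point_cong_open:
  assumes "open S" "x \<in> S" "\<And>y. y \<in> S \<Longrightarrow> f y = g y"
  shows "critical_point f x \<longleftrightarrow> critical_point g x"
  unfolding critical_point_def
  using assms by (metis has_derivative_transform_within_open)

lemma critical_point_compose_bounded_linear:
  assumes "bounded_linear T" "critical_point f (T x)"
  shows "critical_point (\<lambda>x. f (T x)) x"
  using diff_chain_at[OF bounded_linear_imp_has_derivative[OF assms(1)], of f "\<lambda>_. 0"] assms(2)
  by (simp add: critical_point_def o_def)

lemma critical_point_compose_linear_iso: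
  assumes "bounded_linear T" "bounded_linear S" "\<And>x. S (T x) = x" "\<And>y. T (S y) = y"
  shows "critical_point (\<lambda>x. f (T x)) x \<longleftrightarrow> critical_point f (T x)"
  using critical_point_compose_bounded_linear[OF assms(2), of "\<lambda>x. f (T x)" "T x"]
    critical_point_compose_bounded_linear[OF assms(1), of f x] assms(3,4)
  by auto

lemma critical_point_iff_gradient_eq_0:
  fixes g :: "'a::real_inner"
  assumes "(f has_derivative (\<lambda>h. c * (g \<bullet> h))) (at x)" "c \<noteq> 0"
  shows "critical_point f x \<longleftrightarrow> g = 0"
proof
  assume "critical_point f x"
  then have "(\<lambda>h. c * (g \<bullet> h)) = (\<lambda>_. 0)"
    using has_derivative_unique[OF assms(1)] by (simp add: critical_point_def)
  then have "c * (g \<bullet> g) = 0" by (metis (no_types))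
  then show "g = 0" using assms(2) by simp
next
  assume "g = 0"
  then show "critical_point f x" using assms(1) by (simp add: critical_point_def)
qed

lemma U_iff_corners:
  assumes "0 \<le> p"
  shows "v \<in> U p \<longleftrightarrow>
    0 < aff v (0, 0) \<and> 0 < aff v (p, 0) \<and> 0 < aff v (0, 1) \<and> 0 < aff v (p, 1)"
proof
  assume "v \<in> U p"
  moreover have "(0, 0) \<in> Delta p" "(p, 0) \<in> Delta p" "(0, 1) \<in> Delta p" "(p, 1) \<in> Delta p"
    using assms by (simp_all add: Delta_def)
  ultimately show "0 < aff v (0, 0) \<and> 0 < aff v (p, 0) \<and> 0 < aff v (0, 1) \<and> 0 < aff v (p, 1)"
    by (simp add: U_def)
next
  assume corners: "0 < aff v (0, 0) \<and> 0 < aff v (p, 0) \<and> 0 < aff v (0, 1) \<and> 0 < aff v (p, 1)"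
  obtain a b c where v: "v = (a, b, c)" by (cases v) auto
  have "0 < a * x + b * y + c" if "0 \<le> x" "x \<le> p" "0 \<le> y" "y \<le> 1" for x y
  proof -
    have "0 < b * y + c" "0 < b * y + (a * p + c)"
      using affine_pos_between[of c b 1 y] affine_pos_between[of "a * p + c" b 1 y] corners that
      by (simp_all add: v aff_def algebra_simps)
    then show ?thesis
      using affine_pos_between[of "b * y + c" a p x] that by (simp add: algebra_simps)
  qed
  then show "v \<in> U p"
    by (auto simp: U_def Delta_def v aff_def)
qed

lemma open_U:
  assumes "0 \<le> p"
  shows "open (U p)"
proof -
  have "U p = {v. 0 < aff v (0, 0) \<and> 0 < aff v (p, 0) \<and> 0 < aff v (0, 1) \<and> 0 < aff v (p, 1)}"
    using U_iff_corners[OF assms] by blast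
  then show ?thesis
    unfolding aff_def by (simp only:) (intro open_Collect_conj open_Collect_less continuous_intros)
qed

definition centred_coords :: "real \<Rightarrow> real \<times> real \<times> real \<Rightarrow> real \<times> real \<times> real" where
  "centred_coords p v = (fst v * p / 2, fst (snd v) / 2, aff v (p / 2, 1 / 2))"

definition centred_cone :: "(real \<times> real \<times> real) set" where
  "centred_cone = {(\<alpha>, \<beta>, u). \<bar>\<alpha>\<bar> + \<bar>\<beta>\<bar> < u}"

lemma centred_coords_corners:
  assumes "centred_coords p v = (\<alpha>, \<beta>, u)"
  shows "aff v (0, 0) = u - \<alpha> - \<beta>" "aff v (p, 0) = u + \<alpha> - \<beta>"
    "aff v (0, 1) = u - \<alpha> + \<beta>" "aff v (p, 1) = u + \<alpha> + \<beta>"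
  using assms by (auto simp: centred_coords_def aff_def)

lemma U_iff_centred_cone:
  assumes "0 \<le> p"
  shows "v \<in> U p \<longleftrightarrow> centred_coords p v \<in> centred_cone"
proof -
  obtain \<alpha> \<beta> u where w: "centred_coords p v = (\<alpha>, \<beta>, u)" by (cases "centred_coords p v") auto
  show ?thesis
    unfolding U_iff_corners[OF assms] centred_coords_corners[OF w] w
    by (auto simp: centred_cone_def abs_if)
qed

definition corner_prod :: "real \<Rightarrow> real \<times> real \<times> real \<Rightarrow> real" where
  "corner_prod p v = aff v (0, 0) * aff v (p, 0) * aff v (0, 1) * aff v (p, 1)"

definition bdry_poly :: "real \<Rightarrow> real \<times> real \<times> real \<Rightarrow> real" where
  "bdry_poly p w = (case w of (\<alpha>, \<beta>, u) \<Rightarrow> (p + 1) * u^2 + (p - 1) * (\<beta>^2 - \<alpha>^2))"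

definition area_poly :: "real \<times> real \<times> real \<Rightarrow> real" where
  "area_poly w = (case w of (\<alpha>, \<beta>, u) \<Rightarrow> 3 * u^4 - 2 * u^2 * (\<alpha>^2 + \<beta>^2) - (\<alpha>^2 - \<beta>^2)^2)"

definition E_centred :: "real \<Rightarrow> real \<times> real \<times> real \<Rightarrow> real" where
  "E_centred p w = 96 * pi^2 * (bdry_poly p w)^2 / (p * area_poly w)"

lemma bdry_integral_closed_form:
  assumes "0 \<le> p" and v: "v \<in> U p"
  shows "bdry_integral p (\<lambda>q. 1 / (aff v q)^2) = 2 * bdry_poly p (centred_coords p v) / corner_prod p v"
proof -
  obtain a b c where v_eq: "v = (a, b, c)" by (cases v) auto
  have pos: "0 < c" "0 < a * p + c" "0 < b + c" "0 < a * p + b + c"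
    using v U_iff_corners[OF assms(1)] by (simp_all add: v_eq aff_def)
  have "bdry_integral p (\<lambda>q. 1 / (aff v q)^2)
      = p / (c * (a * p + c)) + p / ((b + c) * (a * p + b + c)) + 1 / (c * (b + c)) + 1 / ((a * p + c) * (a * p + b + c))"
    using integral_inverse_square_affine[of c a p] integral_inverse_square_affine[of "b + c" a p]
      integral_inverse_square_affine[of c b 1] integral_inverse_square_affine[of "a * p + c" b 1] pos assms(1)
    by (simp add: bdry_integral_def v_eq aff_def algebra_simps)
  also have "\<dots> = 2 * bdry_poly p (centred_coords p v) / corner_prod p v"
    using pos unfolding v_eq bdry_poly_def centred_coords_def corner_prod_def aff_def
    by (simp add: divide_simps) algebra
  finally show ?thesis .
qed

lemma outer_integral_inverse_fourth_affine:
  fixes a b c p :: real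
  assumes "0 \<le> p" and pos_edge: "\<And>x. x \<in> {0..p} \<Longrightarrow> 0 < a * x + c \<and> 0 < a * x + (b + c)"
  shows "integral {0..p} (\<lambda>x. (3 * (a * x + c)^2 + 3 * (a * x + c) * b + b^2)
                              / (3 * (a * x + c)^3 * (a * x + (b + c))^3))
    = p * area_poly (a * p / 2, b / 2, a * p / 2 + b / 2 + c)
        / (3 * (c * (a * p + c) * (b + c) * (a * p + b + c))^2)"
  (is "integral {0..p} ?f = ?rhs")
proof -
  have ends: "0 < c" "0 < a * p + c" "0 < b + c" "0 < a * p + b + c"
    using pos_edge[of 0] pos_edge[of p] assms(1) by (simp_all add: algebra_simps)
  show ?thesis
  proof (cases "b = 0")
    case True
    define X where "X = 3 * c^2 + 3 * c * a * p + a^2 * p^2"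
    have "integral {0..p} ?f = integral {0..p} (\<lambda>x. 1 / (a * x + c)^4)"
      using pos_edge True by (intro integral_cong) (simp add: divide_simps)
    also have "\<dots> = p * X / (3 * c^3 * (a * p + c)^3)"
      using integral_inverse_fourth_affine[of c a p] ends assms(1) by (simp add: X_def)
    also have "\<dots> = ?rhs"
    proof -
      have "area_poly (a * p / 2, b / 2, a * p / 2 + b / 2 + c) = c * (a * p + c) * X"
        using True by (simp add: area_poly_def X_def field_simps power2_eq_square power4_eq_xxxx)
      then show ?thesis
        using ends True by (simp add: power2_eq_square power3_eq_cube)
    qed
    finally show ?thesis .
  next
    case False
    have "?f x = (1 / (a * x + c)^3 - 1 / (a * x + (b + c))^3) / (3 * b)" if "x \<in> {0..p}" for x
      using pos_edge[OF that] False by (simp add: divide_simps) algebra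
    then have "integral {0..p} ?f
        = integral {0..p} (\<lambda>x. (1 / (a * x + c)^3 - 1 / (a * x + (b + c))^3) / (3 * b))"
      by (rule integral_cong)
    also have "\<dots> = (integral {0..p} (\<lambda>x. 1 / (a * x + c)^3)
                    - integral {0..p} (\<lambda>x. 1 / (a * x + (b + c))^3)) / (3 * b)"
    proof -
      have "(\<lambda>x. 1 / (a * x + k)^3) integrable_on {0..p}" if "\<And>x. x \<in> {0..p} \<Longrightarrow> 0 < a * x + k" for k
        using that by (intro integrable_continuous_interval continuous_intros) (fastforce dest: that)
      then have "(\<lambda>x. 1 / (a * x + c)^3) integrable_on {0..p}" "(\<lambda>x. 1 / (a * x + (b + c))^3) integrable_on {0..p}"
        using pos_edge by blast+
      from integral_diff[OF this] show ?thesis by simp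
    qed
    also have "\<dots> = (p * (2 * c + a * p) / (2 * c^2 * (a * p + c)^2)
                    - p * (2 * (b + c) + a * p) / (2 * (b + c)^2 * (a * p + (b + c))^2)) / (3 * b)"
      using integral_inverse_cube_affine[of c a p] integral_inverse_cube_affine[of "b + c" a p]
        ends assms(1) by (simp add: algebra_simps)
    also have "\<dots> = ?rhs"
      using ends[THEN less_imp_neq] False unfolding area_poly_def by (simp add: divide_simps) algebra
    finally show ?thesis .
  qed
qed

lemma area_integral_closed_form:
  assumes "0 \<le> p" and v: "v \<in> U p"
  shows "integral (Delta p) (\<lambda>q. 1 / (aff v q)^4) = p * area_poly (centred_coords p v) / (3 * (corner_prod p v)^2)"
proof -
  obtain a b c where v_eq: "v = (a, b, c)" by (cases v) auto
  have pos: "0 < a * x + b * y + c" if "(x, y) \<in> Delta p" for x y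
    using v that by (auto simp: U_def v_eq aff_def)
  have pos_edge: "0 < a * x + c \<and> 0 < a * x + (b + c)" if "x \<in> {0..p}" for x
    using pos[of x 0] pos[of x 1] that by (auto simp: Delta_def algebra_simps)
  have "continuous_on (cbox (0, 0) (p, 1)) (\<lambda>q. 1 / (aff v q)^4)"
    using pos by (auto simp: aff_def v_eq Delta_def intro!: continuous_intros) fastforce
  then have "integral (Delta p) (\<lambda>q. 1 / (aff v q)^4)
      = integral {0..p} (\<lambda>x. integral {0..1} (\<lambda>y. 1 / (b * y + (a * x + c))^4))"
    unfolding Delta_def by (simp add: integral_prod_continuous v_eq aff_def algebra_simps)
  also have "\<dots> = integral {0..p} (\<lambda>x. (3 * (a * x + c)^2 + 3 * (a * x + c) * b + b^2)
                                     / (3 * (a * x + c)^3 * (a * x + (b + c))^3))"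
  proof (rule integral_cong)
    fix x assume "x \<in> {0..p}"
    then show "integral {0..1} (\<lambda>y. 1 / (b * y + (a * x + c))^4)
        = (3 * (a * x + c)^2 + 3 * (a * x + c) * b + b^2) / (3 * (a * x + c)^3 * (a * x + (b + c))^3)"
      using integral_inverse_fourth_affine[of "a * x + c" b 1] pos_edge[of x] by (simp add: algebra_simps)
  qed
  also have "\<dots> = p * area_poly (centred_coords p v) / (3 * (corner_prod p v)^2)"
    using outer_integral_inverse_fourth_affine[OF assms(1) pos_edge]
    by (simp add: v_eq centred_coords_def corner_prod_def aff_def algebra_simps)
  finally show ?thesis .
qed

lemma sum_squares_lt_of_centred_cone:
  assumes "(\<alpha>, \<beta>, u) \<in> centred_cone"
  shows "\<alpha>^2 + \<beta>^2 < u^2"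
proof -
  have "\<alpha>^2 + \<beta>^2 \<le> (\<bar>\<alpha>\<bar> + \<bar>\<beta>\<bar>)^2" by (simp add: power2_eq_square algebra_simps)
  also have "\<dots> < u^2"
    using assms by (intro power_strict_mono) (auto simp: centred_cone_def)
  finally show ?thesis .
qed

lemma area_poly_pos:
  assumes "(\<alpha>, \<beta>, u) \<in> centred_cone"
  shows "0 < area_poly (\<alpha>, \<beta>, u)"
proof -
  have "area_poly (\<alpha>, \<beta>, u) = (u^2 - \<alpha>^2 - \<beta>^2) * (3 * u^2 + \<alpha>^2 + \<beta>^2) + 4 * \<alpha>^2 * \<beta>^2"
    by (simp add: area_poly_def) algebra
  moreover have "0 < (u^2 - \<alpha>^2 - \<beta>^2) * (3 * u^2 + \<alpha>^2 + \<beta>^2)"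
    using sum_squares_lt_of_centred_cone[OF assms] zero_le_power2[of \<alpha>] zero_le_power2[of \<beta>]
    by (intro mult_pos_pos) linarith+
  ultimately show ?thesis by (simp add: add_pos_nonneg)
qed

lemma bdry_poly_pos:
  assumes "1 \<le> p" "(\<alpha>, \<beta>, u) \<in> centred_cone"
  shows "0 < bdry_poly p (\<alpha>, \<beta>, u)"
proof -
  have "bdry_poly p (\<alpha>, \<beta>, u) = 2 * u^2 + (p - 1) * (u^2 - \<alpha>^2) + (p - 1) * \<beta>^2"
    by (simp add: bdry_poly_def algebra_simps)
  moreover have "0 < u" using assms(2) by (auto simp: centred_cone_def)
  moreover have "0 \<le> (p - 1) * (u^2 - \<alpha>^2)"
    using assms(1) sum_squares_lt_of_centred_cone[OF assms(2)] zero_le_power2[of \<beta>]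
    by (intro mult_nonneg_nonneg) linarith+
  ultimately show ?thesis using assms(1) by (simp add: add_pos_nonneg)
qed

lemma E_eq_E_centred:
  assumes "0 < p" "v \<in> U p"
  shows "E p v = E_centred p (centred_coords p v)"
proof -
  have P: "0 < corner_prod p v"
    using U_iff_corners[of p v] assms by (simp add: corner_prod_def)
  have Q: "0 < area_poly (centred_coords p v)"
    using U_iff_centred_cone[of p v] assms area_poly_pos by (cases "centred_coords p v") auto
  have "E p v = 8 * pi^2 * (2 * bdry_poly p (centred_coords p v) / corner_prod p v)^2
      / (p * area_poly (centred_coords p v) / (3 * (corner_prod p v)^2))"
    using assms by (simp add: E_def bdry_integral_closed_form area_integral_closed_form)
  also have "\<dots> = E_centred p (centred_coords p v)"
    using P Q assms(1) by (simp add: E_centred_def field_simps power2_eq_square)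
  finally show ?thesis .
qed

lemma critical_point_E_iff_centred:
  assumes "0 < p" "v \<in> U p"
  shows "critical_point (E p) v \<longleftrightarrow> critical_point (E_centred p) (centred_coords p v)"
proof -
  define S where "S w = (2 * fst w / p, 2 * fst (snd w), snd (snd w) - fst w - fst (snd w))" for w
  have "bounded_linear (centred_coords p)" "bounded_linear S"
    unfolding linear_conv_bounded_linear[symmetric]
    by (auto intro!: linearI simp: centred_coords_def S_def aff_def add_divide_distrib algebra_simps)
  moreover have "S (centred_coords p x) = x" "centred_coords p (S w) = w" for x w
    using assms(1) by (auto simp: S_def centred_coords_def aff_def)
  ultimately have "critical_point (\<lambda>x. E_centred p (centred_coords p x)) v
      \<longleftrightarrow> critical_point (E_centred p) (centred_coords p v)"
    by (rule critical_point_compose_linear_iso)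
  moreover have "critical_point (E p) v \<longleftrightarrow> critical_point (\<lambda>x. E_centred p (centred_coords p x)) v"
    using assms E_eq_E_centred[OF assms(1)] by (intro critical_point_cong_open[OF open_U]) simp_all
  ultimately show ?thesis by simp
qed

text \<open>The numerator 2 Q \<nabla>L - L \<nabla>Q of the gradient of L^2 / Q, for L = bdry_poly p and Q = area_poly.\<close>
definition grad_numerator :: "real \<Rightarrow> real \<times> real \<times> real \<Rightarrow> real \<times> real \<times> real" where
  "grad_numerator p w = (case w of (\<alpha>, \<beta>, u) \<Rightarrow>
     (4 * \<alpha> * (bdry_poly p w * (u^2 + \<alpha>^2 - \<beta>^2) - (p - 1) * area_poly w),
      4 * \<beta> * ((p - 1) * area_poly w + bdry_poly p w * (u^2 - \<alpha>^2 + \<beta>^2)),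
      4 * u * ((p + 1) * area_poly w - bdry_poly p w * (3 * u^2 - \<alpha>^2 - \<beta>^2))))"

lemma has_derivative_E_centred:
  assumes "p \<noteq> 0" "area_poly w \<noteq> 0"
  shows "(E_centred p has_derivative
           (\<lambda>h. 96 * pi^2 * bdry_poly p w / (p * (area_poly w)^2) * (grad_numerator p w \<bullet> h))) (at w)"
proof -
  obtain \<alpha> \<beta> u where w: "w = (\<alpha>, \<beta>, u)" by (cases w) auto
  have E: "E_centred p = (\<lambda>w. 96 * pi^2 * ((p + 1) * (snd (snd w))^2 + (p - 1) * ((fst (snd w))^2 - (fst w)^2))^2
      / (p * (3 * (snd (snd w))^4 - 2 * (snd (snd w))^2 * ((fst w)^2 + (fst (snd w))^2) - ((fst w)^2 - (fst (snd w))^2)^2)))"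
    by (simp add: fun_eq_iff E_centred_def bdry_poly_def area_poly_def split_def)
  show ?thesis
    unfolding E
    apply (rule has_derivative_eq_rhs)
     apply (rule derivative_eq_intros refl)+
    using assms
      apply (simp add: w area_poly_def)
     apply (rule refl)
    using assms
    apply (clarsimp simp: w fun_eq_iff grad_numerator_def bdry_poly_def area_poly_def inner_prod_def)
    apply (simp add: divide_simps)
    apply algebra
    done
qed

lemma grad_numerator_beta_0:
  "grad_numerator p (\<alpha>, 0, u) = (8 * \<alpha> * u^2 * ((2 - p) * u^2 + p * \<alpha>^2), 0,
                             - 8 * \<alpha>^2 * u * ((2 - p) * u^2 + p * \<alpha>^2))"
  by (simp add: grad_numerator_def bdry_poly_def area_poly_def) algebra

lemma grad_numerator_eq_0_iff:
  assumes "1 \<le> p" and w: "(\<alpha>, \<beta>, u) \<in> centred_cone"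
  shows "grad_numerator p (\<alpha>, \<beta>, u) = 0 \<longleftrightarrow> \<beta> = 0 \<and> (\<alpha> = 0 \<or> (2 - p) * u^2 + p * \<alpha>^2 = 0)"
proof -
  have u: "0 < u" using w by (auto simp: centred_cone_def)
  have "0 < u^2 - \<alpha>^2 + \<beta>^2"
    using sum_squares_lt_of_centred_cone[OF w] zero_le_power2[of \<beta>] by linarith
  then have "0 < bdry_poly p (\<alpha>, \<beta>, u) * (u^2 - \<alpha>^2 + \<beta>^2)"
    using bdry_poly_pos[OF assms] by simp
  moreover have "0 \<le> (p - 1) * area_poly (\<alpha>, \<beta>, u)"
    using area_poly_pos[OF w] assms(1) by simp
  ultimately have "0 < (p - 1) * area_poly (\<alpha>, \<beta>, u) + bdry_poly p (\<alpha>, \<beta>, u) * (u^2 - \<alpha>^2 + \<beta>^2)"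
    by linarith
  then have "grad_numerator p (\<alpha>, \<beta>, u) = 0 \<Longrightarrow> \<beta> = 0"
    by (simp add: grad_numerator_def zero_prod_def)
  then show ?thesis
    using u by (auto simp: grad_numerator_beta_0 zero_prod_def)
qed

lemma critical_point_E_centred_iff:
  assumes "1 \<le> p" and w: "(\<alpha>, \<beta>, u) \<in> centred_cone"
  shows "critical_point (E_centred p) (\<alpha>, \<beta>, u) \<longleftrightarrow> \<beta> = 0 \<and> (\<alpha> = 0 \<or> (2 - p) * u^2 + p * \<alpha>^2 = 0)"
  using critical_point_iff_gradient_eq_0[OF has_derivative_E_centred] grad_numerator_eq_0_iff[OF assms]
    area_poly_pos[OF w] bdry_poly_pos[OF assms] assms(1)
  by simp

lemma powr_three_halves: "0 < (p::real) \<Longrightarrow> p powr (3/2) = p * sqrt p"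
  using powr_add[of p 1 "1/2"] by (simp add: powr_half_sqrt)

lemma critical_quadric_eq_0_iff:
  fixes p u a :: real
  defines "\<kappa> \<equiv> p powr (3/2) / sqrt (p - 2)"
  assumes "2 < p" "0 \<le> u"
  shows "(2 - p) * u^2 + p * (a * p / 2)^2 = 0 \<longleftrightarrow> \<kappa> * \<bar>a\<bar> = 2 * u"
proof -
  have "\<kappa>^2 = p^3 / (p - 2)"
    using assms(2) by (simp add: \<kappa>_def powr_three_halves power_divide power_mult_distrib power3_eq_cube power2_eq_square)
  then have "(2 - p) * u^2 + p * (a * p / 2)^2 = ((\<kappa> * \<bar>a\<bar>)^2 - (2 * u)^2) * (p - 2) / 4"
    using assms(2) by (simp add: power_mult_distrib field_simps) algebra
  then have "(2 - p) * u^2 + p * (a * p / 2)^2 = 0 \<longleftrightarrow> (\<kappa> * \<bar>a\<bar>)^2 = (2 * u)^2"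
    using assms(2) by (simp only:) simp
  also have "\<dots> \<longleftrightarrow> \<kappa> * \<bar>a\<bar> = 2 * u"
    using assms(2,3) by (intro power2_eq_iff_nonneg) (auto simp: \<kappa>_def)
  finally show ?thesis .
qed

lemma less_powr_three_halves_div:
  assumes "2 < p"
  shows "p < p powr (3/2) / sqrt (p - 2)"
proof -
  have "sqrt (p - 2) < sqrt p" using assms by simp
  then have "p * sqrt (p - 2) < p * sqrt p" using assms by simp
  then show ?thesis using assms by (simp add: powr_three_halves field_simps)
qed

lemma off_axis_critical_iff:
  fixes p a c :: real
  defines "\<kappa> \<equiv> p powr (3/2) / sqrt (p - 2)"
  assumes "2 < p" "a \<noteq> 0"
  shows "\<bar>a * p / 2\<bar> < a * p / 2 + c \<and> (2 - p) * (a * p / 2 + c)^2 + p * (a * p / 2)^2 = 0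
    \<longleftrightarrow> \<kappa> * \<bar>a\<bar> = a * p + 2 * c"
proof -
  have root: "(2 - p) * (a * p / 2 + c)^2 + p * (a * p / 2)^2 = 0 \<longleftrightarrow> \<kappa> * \<bar>a\<bar> = a * p + 2 * c"
    if "0 \<le> a * p / 2 + c"
    using critical_quadric_eq_0_iff[OF assms(2) that, of a] by (simp add: \<kappa>_def algebra_simps)
  have "p * \<bar>a\<bar> < \<kappa> * \<bar>a\<bar>"
    using mult_strict_right_mono[OF less_powr_three_halves_div[OF assms(2)], of "\<bar>a\<bar>"] assms(3)
    unfolding \<kappa>_def by simp
  then have "\<bar>a * p / 2\<bar> < \<kappa> * \<bar>a\<bar> / 2"
    using assms(2) by (simp add: abs_mult mult.commute)
  then show ?thesis
    using root by (auto simp: field_simps)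
qed

lemma critical_points_E_iff:
  fixes p :: real
  defines "\<kappa> \<equiv> p powr (3/2) / sqrt (p - 2)"
  assumes "1 \<le> p"
  shows "v \<in> U p \<and> critical_point (E p) v \<longleftrightarrow>
    (\<exists>t>0. v = t *\<^sub>R (0, 0, 1)
         \<or> 2 < p \<and> (v = t *\<^sub>R (1, 0, (\<kappa> - p) / 2) \<or> v = t *\<^sub>R (-1, 0, (\<kappa> + p) / 2)))"
proof -
  obtain a b c where v: "v = (a, b, c)" by (cases v) auto
  have p: "0 < p" using assms(2) by simp
  have w: "centred_coords p v = (a * p / 2, b / 2, a * p / 2 + b / 2 + c)"
    by (simp add: v centred_coords_def aff_def)
  have "v \<in> U p \<and> critical_point (E p) v \<longleftrightarrow> b = 0 \<and> \<bar>a * p / 2\<bar> < a * p / 2 + c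
      \<and> (a = 0 \<or> (2 - p) * (a * p / 2 + c)^2 + p * (a * p / 2)^2 = 0)"
    using U_iff_centred_cone[of p v] critical_point_E_iff_centred[OF p, of v]
      critical_point_E_centred_iff[OF assms(2)] p
    by (auto simp: w centred_cone_def)
  also have "\<dots> \<longleftrightarrow> b = 0 \<and> (a = 0 \<and> 0 < c \<or> a \<noteq> 0 \<and> 2 < p \<and> \<kappa> * \<bar>a\<bar> = a * p + 2 * c)"
  proof (cases "a \<noteq> 0 \<and> 2 < p")
    case True
    then show ?thesis using off_axis_critical_iff[of p a c] by (auto simp: \<kappa>_def)
  next
    case False
    moreover have "0 < (2 - p) * (a * p / 2 + c)^2 + p * (a * p / 2)^2" if "a \<noteq> 0" "p \<le> 2"
      using that p by (intro add_nonneg_pos) auto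
    ultimately show ?thesis by force
  qed
  also have "\<dots> \<longleftrightarrow> (\<exists>t>0. v = t *\<^sub>R (0, 0, 1)
         \<or> 2 < p \<and> (v = t *\<^sub>R (1, 0, (\<kappa> - p) / 2) \<or> v = t *\<^sub>R (-1, 0, (\<kappa> + p) / 2)))"
    by (auto simp: v abs_if field_simps intro: exI[of _ "- a"] exI[of _ a])
  finally show ?thesis .
qed

theorem mainTheorem4:
  fixes p :: real
  assumes "p \<ge> 1"
  shows "(p \<le> 2 \<longrightarrow>
            {v \<in> U p. critical_point (E p) v} = {t *\<^sub>R (0, 0, 1) | t. t > 0})
       \<and> (p > 2 \<longrightarrow>
            {v \<in> U p. critical_point (E p) v} =
              {t *\<^sub>R (0, 0, 1) | t. t > 0}
              \<union> {t *\<^sub>R (1, 0, (p powr (3/2) / sqrt (p - 2) - p) / 2) | t. t > 0}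
              \<union> {t *\<^sub>R (-1, 0, (p powr (3/2) / sqrt (p - 2) + p) / 2) | t. t > 0})"
  using critical_points_E_iff[OF assms] by auto

end
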